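(* Let $\mathcal{A}$ be a finite set of players and $\mathcal{R}$ a finite set of resources. Each player $i\in\mathcal{A}$ has a finite set $\Gamma_i$ of strategies (trajectories), and each $\gamma_i\in\Gamma_i$ determines a set $\gamma_i^{\mathrm{cg}}\subseteq\mathcal{R}$ of used resources. For a joint strategy $\gamma=(\gamma_i)_{i\in\mathcal{A}}\in\Gamma=\prod_i\Gamma_i$, the load of $r\in\mathcal{R}$ is $l_r(\gamma)=\sum_{i\in\mathcal{A}}\mathbf{1}[r\in\gamma_i^{\mathrm{cg}}]$. Each resource $r$ has a cost function $J_r:\mathbb{N}\to\mathbb{R}$ which is a polynomial with non-negative coefficients and degree at most $d\in\mathbb{N}$. Player $i$'s cost is $J_i(\gamma)=J_i^{\mathrm{cg}}(\gamma)+J_i^{\mathrm{per}}(\gamma_i)$, where $J_i^{\mathrm{cg}}(\gamma)=\sum_{r\in\gamma_i^{\mathrm{cg}}}J_r(l_r(\gamma))$ and $J_i^{\mathrm{per}}:\Gamma_i\to\mathbb{R}_{\ge 0}$ is a personal cost depending only on $\gamma_i$. Let $C(\gamma)=\sum_{i}J_i(\gamma)$, let $\Gamma_{\mathrm{NE}}$ be the set of pure Nash equilibria, $\Gamma^\star=\arg\min_{\gamma\in\Gamma}C(\gamma)$, and $\mathrm{PoA}=\max_{\gamma\in\Gamma_{\mathrm{NE}}}C(\gamma)/\min_{\gamma\in\Gamma}C(\gamma)$. Let $\alpha^\star\in\mathbb{R}_{\ge0}$ be the largest constant such that $J_i^{\mathrm{per}}(\gamma_i)\ge\alpha^\star J_i^{\mathrm{cg}}(\gamma)$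 for all $i\in\mathcal{A}$ and all $\gamma\in\Gamma_{\mathrm{NE}}\cup\Gamma^\star$. Let $\Psi_{d,\alpha^\star}$ be the positive real solution of $x^{d+1}+\alpha^\star x^{d+1}=(x+1)^d+\alpha^\star$ and $k=\lfloor\Psi_{d,\alpha^\star}\rfloor$. Then $$\mathrm{PoA}\le\frac{(k+1)^{2d+1}-k^{d+1}(k+2)^d+\alpha^\star\left((k+1)^{d+1}-k^{d+1}\right)}{(1+\alpha^\star)\left((k+1)^{d+1}-k^{d+1}\right)-(k+2)^d+(k+1)^d}.$$
   Context: This models urban driving games as congestion games: resources are cells of a discretization of the road in space, time and "proximity levels", and a trajectory uses the resources corresponding to its (inflated) spatio-temporal occupancy. Costs are assumed positive (non-negative). A pure Nash equilibrium is a $\gamma$ with $J_i(\gamma)\le J_i(\gamma_i',\gamma_{-i})$ for all $i$ and all $\gamma_i'\in\Gamma_i$. *)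

theory Defs
  imports "HOL-Library.FuncSet" "HOL-Computational_Algebra.Polynomial"
begin

text \<open>Congestion game: players A, strategy sets Gam i, used resources use i s,
  resource costs cost r (real polynomials evaluated at the load), personal costs per i s.
  Joint strategies are the extensional functions in PiE A Gam.\<close>

definition load :: "'a set \<Rightarrow> ('a \<Rightarrow> 'b \<Rightarrow> 'r set) \<Rightarrow> ('a \<Rightarrow> 'b) \<Rightarrow> 'r \<Rightarrow> nat" where
  "load A use g r = card {i \<in> A. r \<in> use i (g i)}"

definition Jcg :: "'a set \<Rightarrow> ('a \<Rightarrow> 'b \<Rightarrow> 'r set) \<Rightarrow> ('r \<Rightarrow> real poly)
    \<Rightarrow> 'a \<Rightarrow> ('a \<Rightarrow> 'b) \<Rightarrow> real" where
  "Jcg A use cost i g = (\<Sum>r\<in>use i (g i). poly (cost r) (real (load A use g r)))"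

definition Jplayer :: "'a set \<Rightarrow> ('a \<Rightarrow> 'b \<Rightarrow> 'r set) \<Rightarrow> ('r \<Rightarrow> real poly)
    \<Rightarrow> ('a \<Rightarrow> 'b \<Rightarrow> real) \<Rightarrow> 'a \<Rightarrow> ('a \<Rightarrow> 'b) \<Rightarrow> real" where
  "Jplayer A use cost per i g = Jcg A use cost i g + per i (g i)"

definition social_cost :: "'a set \<Rightarrow> ('a \<Rightarrow> 'b \<Rightarrow> 'r set) \<Rightarrow> ('r \<Rightarrow> real poly)
    \<Rightarrow> ('a \<Rightarrow> 'b \<Rightarrow> real) \<Rightarrow> ('a \<Rightarrow> 'b) \<Rightarrow> real" where
  "social_cost A use cost per g = (\<Sum>i\<in>A. Jplayer A use cost per i g)"

definition is_pure_NE :: "'a set \<Rightarrow> ('a \<Rightarrow> 'b set) \<Rightarrow> ('a \<Rightarrow> 'b \<Rightarrow> 'r set) \<Rightarrow> ('r \<Rightarrow> real poly)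
    \<Rightarrow> ('a \<Rightarrow> 'b \<Rightarrow> real) \<Rightarrow> ('a \<Rightarrow> 'b) \<Rightarrow> bool" where
  "is_pure_NE A Gam use cost per g \<longleftrightarrow> g \<in> PiE A Gam \<and>
     (\<forall>i\<in>A. \<forall>s\<in>Gam i. Jplayer A use cost per i g \<le> Jplayer A use cost per i (g(i := s)))"

definition is_social_opt :: "'a set \<Rightarrow> ('a \<Rightarrow> 'b set) \<Rightarrow> ('a \<Rightarrow> 'b \<Rightarrow> 'r set) \<Rightarrow> ('r \<Rightarrow> real poly)
    \<Rightarrow> ('a \<Rightarrow> 'b \<Rightarrow> real) \<Rightarrow> ('a \<Rightarrow> 'b) \<Rightarrow> bool" where
  "is_social_opt A Gam use cost per g \<longleftrightarrow> g \<in> PiE A Gam \<and>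
     (\<forall>g'\<in>PiE A Gam. social_cost A use cost per g \<le> social_cost A use cost per g')"

definition alpha_ok :: "'a set \<Rightarrow> ('a \<Rightarrow> 'b set) \<Rightarrow> ('a \<Rightarrow> 'b \<Rightarrow> 'r set) \<Rightarrow> ('r \<Rightarrow> real poly)
    \<Rightarrow> ('a \<Rightarrow> 'b \<Rightarrow> real) \<Rightarrow> real \<Rightarrow> bool" where
  "alpha_ok A Gam use cost per a \<longleftrightarrow> a \<ge> 0 \<and>
     (\<forall>g. is_pure_NE A Gam use cost per g \<or> is_social_opt A Gam use cost per g \<longrightarrow>
        (\<forall>i\<in>A. per i (g i) \<ge> a * Jcg A use cost i g))"

definition poa_bound :: "nat \<Rightarrow> real \<Rightarrow> nat \<Rightarrow> real" where
  "poa_bound d a k =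
    (real (k+1)^(2*d+1) - real k^(d+1) * real (k+2)^d + a * (real (k+1)^(d+1) - real k^(d+1)))
    / ((1 + a) * (real (k+1)^(d+1) - real k^(d+1)) - real (k+2)^d + real (k+1)^d)"

end

theory Submission
  imports Defs
begin

text \<open>A smoothness argument. Let D x = (x+1)^(d+1) - x^(d+1), E x = (x+2)^d - (x+1)^d and
  k = floor psi, and put mu = E k / D k and lambda = ((k+1)^(2d+1) - k^(d+1) (k+2)^d) / D k.
  By Cauchy's mean value theorem E/D decreases along unit steps, so
  E k x^(d+1) - D k (x+1)^d is minimal over the naturals at x = k; this is the inequality
  (x+1)^d \<le> lambda + mu x^(d+1), which extends to y (x+1)^j \<le> lambda y^(j+1) + mu x^(j+1)
  for naturals x, y and j \<le> d, hence to every cost polynomial evaluated at loads.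
  Summing the Nash inequalities of an equilibrium g against a social optimum then gives
  C g \<le> lambda U + mu X + V, where X, U are the congestion parts of the costs of g and of the
  optimum and V is the personal part of the optimum. The bounds on the personal costs by alpha
  times the congestion costs turn this into (1 + alpha - mu) C g \<le> (lambda + alpha) C opt, and
  k = floor psi is exactly what makes mu < 1 + alpha.\<close>

lemma poly_mono_of_nonneg_coeffs:
  fixes p :: "real poly"
  assumes "\<And>n. coeff p n \<ge> 0" "0 \<le> x" "x \<le> y"
  shows "poly p x \<le> poly p y"
  unfolding poly_altdef using assms by (intro sum_mono mult_left_mono power_mono) auto

lemma pow_ratio_strict_mono:
  fixes x y :: real
  assumes "0 < x" "x < y"
  shows "x^(n+1) * (y+1)^n < y^(n+1) * (x+1)^n"
proof -
  have "(x * (y+1))^n \<le> (y * (x+1))^n"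
    using assms by (intro power_mono) (auto simp: algebra_simps)
  then have "(x * (y+1))^n * x < (y * (x+1))^n * y"
    using assms by (intro mult_le_less_imp_less) auto
  then show ?thesis by (simp add: power_mult_distrib mult_ac)
qed

lemma pow_ratio_mono:
  fixes x y :: real
  assumes "0 < x" "x \<le> y"
  shows "x^(n+1) * (y+1)^n \<le> y^(n+1) * (x+1)^n"
  using pow_ratio_strict_mono[of x y n] assms by (cases "x = y") auto

definition pow_diff :: "nat \<Rightarrow> real \<Rightarrow> real" where
  "pow_diff d x = (x+1)^(d+1) - x^(d+1)"

definition shifted_pow_diff :: "nat \<Rightarrow> real \<Rightarrow> real" where
  "shifted_pow_diff d x = (x+2)^d - (x+1)^d"

lemma pow_diff_pos:
  assumes "0 \<le> x"
  shows "0 < pow_diff d x"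
proof -
  have "x^(d+1) < (x+1)^(d+1)" using assms by (intro power_strict_mono) auto
  then show ?thesis unfolding pow_diff_def by simp
qed

lemma shifted_pow_diff_nonneg: "0 \<le> x \<Longrightarrow> 0 \<le> shifted_pow_diff d x"
  unfolding shifted_pow_diff_def by (simp add: power_mono)

lemma pow_diffs_mvt:
  assumes "d \<ge> 1"
  obtains c where "x < c" "c < x + 1"
    "shifted_pow_diff d x * (real (d+1) * c^d) = pow_diff d x * (real d * (c+1)^(d-1))"
proof -
  have "\<exists>c. x < c \<and> c < x + 1 \<and>
     ((\<lambda>t. (t+1)^d) (x+1) - (\<lambda>t. (t+1)^d) x) * (\<lambda>t. real (d+1) * t^d) c
     = ((\<lambda>t::real. t^(d+1)) (x+1) - (\<lambda>t. t^(d+1)) x) * (\<lambda>t. real d * (t+1)^(d-1)) c"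
  proof (rule GMVT')
    fix z :: real
    show "DERIV (\<lambda>t. t^(d+1)) z :> real (d+1) * z^d"
      using DERIV_pow[of "d+1" z] by simp
    show "DERIV (\<lambda>t. (t+1)^d) z :> real d * (z+1)^(d-1)"
      by (auto intro!: derivative_eq_intros)
  qed (auto intro!: continuous_intros)
  then show ?thesis
    using that unfolding shifted_pow_diff_def pow_diff_def by (auto simp: add.assoc)
qed

text \<open>By Cauchy's mean value theorem shifted_pow_diff d x / pow_diff d x equals
  d (c+1)^(d-1) / ((d+1) c^d) for some c between x and x + 1, which decreases in c.\<close>
lemma pow_diffs_ratio_antimono:
  assumes "0 \<le> x" "x + 1 \<le> y"
  shows "shifted_pow_diff d y * pow_diff d x \<le> shifted_pow_diff d x * pow_diff d y"
proof (cases "d = 0")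
  case True
  then show ?thesis by (simp add: shifted_pow_diff_def)
next
  case False
  then have "d \<ge> 1" by simp
  obtain c where c: "x < c" "c < x + 1"
    "shifted_pow_diff d x * (real (d+1) * c^d) = pow_diff d x * (real d * (c+1)^(d-1))"
    using pow_diffs_mvt[OF \<open>d \<ge> 1\<close>] by blast
  obtain c' where c': "y < c'" "c' < y + 1"
    "shifted_pow_diff d y * (real (d+1) * c'^d) = pow_diff d y * (real d * (c'+1)^(d-1))"
    using pow_diffs_mvt[OF \<open>d \<ge> 1\<close>] by blast
  have "0 < c" "c < c'" using assms c c' by auto
  have c_pow: "(c'+1)^(d-1) * c^d \<le> (c+1)^(d-1) * c'^d"
    using pow_ratio_mono[of c c' "d-1"] \<open>0 < c\<close> \<open>c < c'\<close> \<open>d \<ge> 1\<close> by (simp add: mult_ac)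
  have "shifted_pow_diff d y * pow_diff d x * (real (d+1) * c'^d) * (real (d+1) * c^d)
      = pow_diff d y * pow_diff d x * real d * real (d+1) * ((c'+1)^(d-1) * c^d)"
    using c'(3) by (simp add: mult_ac)
  also have "\<dots> \<le> pow_diff d y * pow_diff d x * real d * real (d+1) * ((c+1)^(d-1) * c'^d)"
    using c_pow pow_diff_pos[of x d] pow_diff_pos[of y d] assms by (intro mult_left_mono) auto
  also have "\<dots> = shifted_pow_diff d x * pow_diff d y * (real (d+1) * c'^d) * (real (d+1) * c^d)"
    using c(3) by (simp add: mult_ac)
  finally show ?thesis
    using \<open>0 < c\<close> \<open>c < c'\<close> by (simp add: mult_le_cancel_right_pos)
qed

definition smooth_gap :: "nat \<Rightarrow> nat \<Rightarrow> real \<Rightarrow> real" where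
  "smooth_gap d k x = shifted_pow_diff d (real k) * x^(d+1) - pow_diff d (real k) * (x+1)^d"

lemma smooth_gap_succ:
  "smooth_gap d k (x+1) - smooth_gap d k x
     = shifted_pow_diff d (real k) * pow_diff d x - pow_diff d (real k) * shifted_pow_diff d x"
  unfolding smooth_gap_def shifted_pow_diff_def pow_diff_def by (simp add: algebra_simps add.assoc)

text \<open>The increments of smooth_gap d k change sign at k, by pow_diffs_ratio_antimono.\<close>
lemma smooth_gap_min: "smooth_gap d k (real k) \<le> smooth_gap d k (real n)"
proof (cases "k \<le> n")
  case True
  then show ?thesis
  proof (induction n rule: dec_induct)
    case (step m)
    have "smooth_gap d k (real m) \<le> smooth_gap d k (real m + 1)"
      using smooth_gap_succ[of d k "real m"] pow_diffs_ratio_antimono[of "real k" "real m" d]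
        step.hyps by (cases "k = m") (auto simp: mult_ac)
    then show ?case using step.IH by (simp add: add.commute)
  qed simp
next
  case False
  then have "n \<le> k" by simp
  then show ?thesis
  proof (induction n rule: inc_induct)
    case (step m)
    have "smooth_gap d k (real m + 1) \<le> smooth_gap d k (real m)"
      using smooth_gap_succ[of d k "real m"] pow_diffs_ratio_antimono[of "real m" "real k" d]
        step.hyps by (auto simp: mult_ac)
    then show ?case using step.IH by (simp add: add.commute)
  qed simp
qed

definition smooth_lambda :: "nat \<Rightarrow> nat \<Rightarrow> real" where
  "smooth_lambda d k = (real (k+1)^(2*d+1) - real k^(d+1) * real (k+2)^d) / pow_diff d (real k)"

definition smooth_mu :: "nat \<Rightarrow> nat \<Rightarrow> real" where
  "smooth_mu d k = shifted_pow_diff d (real k) / pow_diff d (real k)"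

lemma smooth_lambda_mult_pow_diff:
  "smooth_lambda d k * pow_diff d (real k) = - smooth_gap d k (real k)"
proof -
  have exp: "2*d+1 = Suc (d+d)" by simp
  have "real (k+1)^(2*d+1) - real k^(d+1) * real (k+2)^d = - smooth_gap d k (real k)"
    unfolding smooth_gap_def shifted_pow_diff_def pow_diff_def exp power_Suc power_add
    by (simp add: algebra_simps)
  then show ?thesis
    unfolding smooth_lambda_def using pow_diff_pos[of "real k" d] by simp
qed

lemma smooth_mu_nonneg: "0 \<le> smooth_mu d k"
  unfolding smooth_mu_def using pow_diff_pos[of "real k" d] shifted_pow_diff_nonneg[of "real k" d]
  by simp

lemma smooth_succ_pow_le: "(real n + 1)^d \<le> smooth_lambda d k + smooth_mu d k * real n^(d+1)"
proof -
  have D: "0 < pow_diff d (real k)" by (simp add: pow_diff_pos)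
  have "pow_diff d (real k) * (real n + 1)^d
      \<le> pow_diff d (real k) * (smooth_lambda d k + smooth_mu d k * real n^(d+1))"
    using smooth_gap_min[of d k n] smooth_lambda_mult_pow_diff[of d k] D
    unfolding smooth_gap_def smooth_mu_def by (simp add: algebra_simps)
  then show ?thesis using D by simp
qed

lemma one_le_smooth_lambda: "1 \<le> smooth_lambda d k"
  using smooth_succ_pow_le[of 0 d k] by simp

lemma smooth_succ_pow_le_lower:
  assumes "j \<le> d"
  shows "(real n + 1)^j \<le> smooth_lambda d k + smooth_mu d k * real n^(j+1)"
proof (cases "n = 0")
  case True
  then show ?thesis using one_le_smooth_lambda[of d k] by simp
next
  case False
  then have "1 \<le> real n" by simp
  then have n_pow: "1 \<le> real n ^ (d - j)" by simp
  have "real n^(d-j) * (real n + 1)^j \<le> (real n + 1)^(d-j) * (real n + 1)^j"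
    by (intro mult_right_mono power_mono) auto
  also have "\<dots> = (real n + 1)^d" using assms by (simp flip: power_add)
  also have "\<dots> \<le> smooth_lambda d k + smooth_mu d k * real n^(d+1)"
    by (rule smooth_succ_pow_le)
  also have "\<dots> \<le> smooth_lambda d k * real n^(d-j) + smooth_mu d k * real n^(d+1)"
    using one_le_smooth_lambda[of d k] n_pow
    by (simp add: mult_left_mono[of 1 _ "smooth_lambda d k", simplified])
  also have "\<dots> = real n^(d-j) * (smooth_lambda d k + smooth_mu d k * real n^(j+1))"
    using assms by (simp add: algebra_simps flip: power_add)
  finally have "real n^(d-j) * (real n + 1)^j
      \<le> real n^(d-j) * (smooth_lambda d k + smooth_mu d k * real n^(j+1))" .
  moreover have "0 < real n^(d-j)" using n_pow by linarith
  ultimately show ?thesis using mult_le_cancel_left_pos by blast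
qed

text \<open>Reduce to smooth_succ_pow_le_lower at n = x div y, using x + 1 \<le> (n + 1) y and n y \<le> x.\<close>
lemma smooth_monomial_nat:
  assumes "j \<le> d"
  shows "real y * (real x + 1)^j \<le> smooth_lambda d k * real y^(j+1) + smooth_mu d k * real x^(j+1)"
proof (cases "y = 0")
  case True
  then show ?thesis using smooth_mu_nonneg[of d k] by simp
next
  case False
  define q where "q = x div y"
  have "x = q * y + x mod y" "x mod y < y" using False by (simp_all add: q_def)
  then have "real x + 1 \<le> (real q + 1) * real y" "real q * real y \<le> real x"
    by (simp_all add: algebra_simps flip: of_nat_mult of_nat_add)
  then have "real y * (real x + 1)^j \<le> real y * ((real q + 1) * real y)^j"
    by (intro mult_left_mono power_mono) auto
  also have "\<dots> = real y^(j+1) * (real q + 1)^j" by (simp add: power_mult_distrib mult_ac)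
  also have "\<dots> \<le> real y^(j+1) * (smooth_lambda d k + smooth_mu d k * real q^(j+1))"
    using smooth_succ_pow_le_lower[OF assms, of q k] by (intro mult_left_mono) auto
  also have "\<dots> = smooth_lambda d k * real y^(j+1) + smooth_mu d k * (real q * real y)^(j+1)"
    by (simp add: algebra_simps power_mult_distrib)
  also have "\<dots> \<le> smooth_lambda d k * real y^(j+1) + smooth_mu d k * real x^(j+1)"
    using \<open>real q * real y \<le> real x\<close> smooth_mu_nonneg[of d k]
    by (intro add_left_mono mult_left_mono power_mono) auto
  finally show ?thesis .
qed

lemma smooth_poly_nat:
  assumes "\<And>n. coeff p n \<ge> 0" "degree p \<le> d"
  shows "real y * poly p (real x + 1)
    \<le> smooth_lambda d k * (real y * poly p (real y)) + smooth_mu d k * (real x * poly p (real x))"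
proof -
  have "real y * poly p (real x + 1) = (\<Sum>i\<le>degree p. coeff p i * (real y * (real x + 1)^i))"
    by (simp add: poly_altdef sum_distrib_left mult_ac)
  also have "\<dots> \<le> (\<Sum>i\<le>degree p.
      coeff p i * (smooth_lambda d k * real y^(i+1) + smooth_mu d k * real x^(i+1)))"
    using assms smooth_monomial_nat by (intro sum_mono mult_left_mono) auto
  also have "\<dots> = smooth_lambda d k * (real y * poly p (real y)) + smooth_mu d k * (real x * poly p (real x))"
    by (simp add: poly_altdef sum_distrib_left sum.distrib algebra_simps)
  finally show ?thesis .
qed

context
  fixes a psi :: real and d :: nat
  assumes a_nonneg: "0 \<le> a" and psi_pos: "0 < psi"
    and psi_root: "psi^(d+1) + a * psi^(d+1) = (psi + 1)^d + a"
begin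

lemma le_root_imp_le:
  assumes "0 < x" "x \<le> psi"
  shows "(1 + a) * x^(d+1) \<le> (x + 1)^d + a"
proof -
  have "x^(d+1) * (psi + 1)^d \<le> psi^(d+1) * (x + 1)^d" "a * x^(d+1) \<le> a * psi^(d+1)"
    using pow_ratio_mono[OF assms, of d] power_mono[OF \<open>x \<le> psi\<close>, of "d+1"] a_nonneg assms
    by (auto intro: mult_left_mono)
  then have "x^(d+1) * ((psi + 1)^d + a) \<le> ((x + 1)^d + a) * psi^(d+1)"
    by (simp add: algebra_simps)
  also have "(psi + 1)^d + a = (1 + a) * psi^(d+1)"
    using psi_root by (simp add: algebra_simps)
  finally show ?thesis using psi_pos by (simp add: mult_le_cancel_right_pos mult_ac)
qed

lemma gt_root_imp_gt:
  assumes "psi < x"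
  shows "(x + 1)^d + a < (1 + a) * x^(d+1)"
proof -
  have "psi^(d+1) * (x + 1)^d < x^(d+1) * (psi + 1)^d" "a * psi^(d+1) \<le> a * x^(d+1)"
    using pow_ratio_strict_mono[OF psi_pos assms, of d] power_mono[of psi x "d+1"]
      a_nonneg assms psi_pos
    by (auto intro: mult_left_mono)
  then have "((x + 1)^d + a) * psi^(d+1) < x^(d+1) * ((psi + 1)^d + a)"
    by (simp add: algebra_simps)
  also have "(psi + 1)^d + a = (1 + a) * psi^(d+1)"
    using psi_root by (simp add: algebra_simps)
  finally show ?thesis using psi_pos by (simp add: mult_less_cancel_right_pos mult_ac)
qed

lemma smooth_mu_floor_root_less: "smooth_mu d (nat \<lfloor>psi\<rfloor>) < 1 + a"
proof -
  define k where "k = nat \<lfloor>psi\<rfloor>"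
  have "(1 + a) * real k^(d+1) \<le> (real k + 1)^d + a"
    using le_root_imp_le[of "real k"] a_nonneg psi_pos by (cases "k = 0") (auto simp: k_def)
  moreover have "(real k + 2)^d + a < (1 + a) * (real k + 1)^(d+1)"
    using gt_root_imp_gt[of "real k + 1"] psi_pos by (simp add: k_def add.assoc)
  ultimately have "shifted_pow_diff d (real k) < (1 + a) * pow_diff d (real k)"
    unfolding shifted_pow_diff_def pow_diff_def by (simp add: algebra_simps)
  then show ?thesis
    unfolding smooth_mu_def k_def[symmetric] using pow_diff_pos[of "real k" d]
    by (simp add: divide_less_eq)
qed

end

lemma poa_bound_eq_smooth: "poa_bound d a k = (smooth_lambda d k + a) / (1 + a - smooth_mu d k)"
proof -
  define N where "N = real (k+1)^(2*d+1) - real k^(d+1) * real (k+2)^d"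
  define D where "D = pow_diff d (real k)"
  define E where "E = shifted_pow_diff d (real k)"
  have "0 < D" unfolding D_def by (simp add: pow_diff_pos)
  have "poa_bound d a k = (N + a * D) / ((1 + a) * D - E)"
    unfolding poa_bound_def N_def D_def E_def pow_diff_def shifted_pow_diff_def
    by (simp add: algebra_simps)
  also have "\<dots> = ((smooth_lambda d k + a) * D) / ((1 + a - smooth_mu d k) * D)"
    using \<open>0 < D\<close> unfolding smooth_lambda_def smooth_mu_def
      N_def[symmetric] D_def[symmetric] E_def[symmetric]
    by (simp add: algebra_simps)
  finally show ?thesis using \<open>0 < D\<close> by simp
qed

lemma smoothness_cost_bound:
  fixes X Y U V lam mu a :: real
  assumes "X + Y \<le> lam * U + mu * X + V" "a * X \<le> Y" "a * U \<le> V"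
    and "1 \<le> lam" "0 \<le> mu" "0 \<le> a" "mu < 1 + a"
  shows "X + Y \<le> (lam + a) / (1 + a - mu) * (U + V)"
proof -
  have "(lam + a) * (U + V) - (1 + a - mu) * (X + Y)
      = (1 + a) * (lam * U + mu * X + V - (X + Y)) + mu * (Y - a * X) + (lam - 1) * (V - a * U)"
    by (simp add: algebra_simps)
  also have "\<dots> \<ge> 0" using assms by (intro add_nonneg_nonneg mult_nonneg_nonneg) auto
  finally have "(1 + a - mu) * (X + Y) \<le> (lam + a) * (U + V)" by simp
  then show ?thesis using \<open>mu < 1 + a\<close> by (simp add: field_simps mult.commute)
qed

lemma sum_players_eq_sum_load:
  assumes "finite A" "finite R" "\<And>i. i \<in> A \<Longrightarrow> use i (g i) \<subseteq> R"
  shows "(\<Sum>i\<in>A. \<Sum>r\<in>use i (g i). F r) = (\<Sum>r\<in>R. real (load A use g r) * (F r :: real))"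
proof -
  have "(\<Sum>r\<in>use i (g i). F r) = (\<Sum>r\<in>R. if r \<in> use i (g i) then F r else 0)" if "i \<in> A" for i
    using assms(2) assms(3)[OF that] by (simp add: sum.inter_restrict[symmetric] Int_absorb1)
  then have "(\<Sum>i\<in>A. \<Sum>r\<in>use i (g i). F r) = (\<Sum>i\<in>A. \<Sum>r\<in>R. if r \<in> use i (g i) then F r else 0)"
    by simp
  also have "\<dots> = (\<Sum>r\<in>R. \<Sum>i\<in>A. if r \<in> use i (g i) then F r else 0)"
    by (rule sum.swap)
  also have "\<dots> = (\<Sum>r\<in>R. real (load A use g r) * F r)"
    using assms(1) by (simp add: sum.If_cases load_def Int_def)
  finally show ?thesis .
qed

lemma load_fun_upd_le:
  assumes "finite A"
  shows "load A use (g(i := s)) r \<le> load A use g r + 1"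
proof -
  have "{j\<in>A. r \<in> use j ((g(i := s)) j)} \<subseteq> insert i {j\<in>A. r \<in> use j (g j)}" by auto
  then have "load A use (g(i := s)) r \<le> card (insert i {j\<in>A. r \<in> use j (g j)})"
    unfolding load_def using assms by (intro card_mono) auto
  also have "\<dots> \<le> load A use g r + 1" unfolding load_def by (simp add: card_insert_le_m1)
  finally show ?thesis .
qed

locale congestion_game =
  fixes A :: "'a set" and Gam :: "'a \<Rightarrow> 'b set" and R :: "'r set"
    and use :: "'a \<Rightarrow> 'b \<Rightarrow> 'r set" and cost :: "'r \<Rightarrow> real poly" and per :: "'a \<Rightarrow> 'b \<Rightarrow> real"
  assumes finite_players: "finite A" and finite_resources: "finite R"
    and use_subset: "\<And>i s. i \<in> A \<Longrightarrow> s \<in> Gam i \<Longrightarrow> use i s \<subseteq> R"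
    and cost_coeff_nonneg: "\<And>r n. r \<in> R \<Longrightarrow> coeff (cost r) n \<ge> 0"
begin

lemma use_subset_PiE: "g \<in> PiE A Gam \<Longrightarrow> i \<in> A \<Longrightarrow> use i (g i) \<subseteq> R"
  using use_subset by auto

lemma sum_Jcg_eq:
  assumes "g \<in> PiE A Gam"
  shows "(\<Sum>i\<in>A. Jcg A use cost i g)
    = (\<Sum>r\<in>R. real (load A use g r) * poly (cost r) (real (load A use g r)))"
  unfolding Jcg_def using assms
  by (intro sum_players_eq_sum_load finite_players finite_resources use_subset_PiE)

lemma social_cost_split:
  "social_cost A use cost per g = (\<Sum>i\<in>A. Jcg A use cost i g) + (\<Sum>i\<in>A. per i (g i))"
  unfolding social_cost_def Jplayer_def by (simp add: sum.distrib)

lemma pure_NE_deviation_bound: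
  assumes "is_pure_NE A Gam use cost per g" "i \<in> A" "s \<in> Gam i"
  shows "Jplayer A use cost per i g
    \<le> (\<Sum>r\<in>use i s. poly (cost r) (real (load A use g r) + 1)) + per i s"
proof -
  have "Jplayer A use cost per i g \<le> Jplayer A use cost per i (g(i := s))"
    using assms unfolding is_pure_NE_def by blast
  also have "\<dots> = (\<Sum>r\<in>use i s. poly (cost r) (real (load A use (g(i := s)) r))) + per i s"
    unfolding Jplayer_def Jcg_def by simp
  also have "\<dots> \<le> (\<Sum>r\<in>use i s. poly (cost r) (real (load A use g r) + 1)) + per i s"
  proof (intro add_right_mono sum_mono poly_mono_of_nonneg_coeffs)
    fix r n assume "r \<in> use i s"
    then show "0 \<le> coeff (cost r) n"
      using use_subset[OF assms(2,3)] by (blast intro: cost_coeff_nonneg)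
    show "real (load A use (g(i := s)) r) \<le> real (load A use g r) + 1"
      using load_fun_upd_le[OF finite_players, of use g i s r] by linarith
  qed simp
  finally show ?thesis .
qed

lemma pure_NE_social_cost_le:
  assumes "is_pure_NE A Gam use cost per g" "g' \<in> PiE A Gam"
  shows "social_cost A use cost per g
    \<le> (\<Sum>r\<in>R. real (load A use g' r) * poly (cost r) (real (load A use g r) + 1))
      + (\<Sum>i\<in>A. per i (g' i))"
proof -
  have "social_cost A use cost per g
      \<le> (\<Sum>i\<in>A. (\<Sum>r\<in>use i (g' i). poly (cost r) (real (load A use g r) + 1)) + per i (g' i))"
    unfolding social_cost_def using assms by (intro sum_mono pure_NE_deviation_bound) auto
  also have "\<dots> = (\<Sum>r\<in>R. real (load A use g' r) * poly (cost r) (real (load A use g r) + 1))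
      + (\<Sum>i\<in>A. per i (g' i))"
    using sum_players_eq_sum_load[OF finite_players finite_resources, of use g'] assms(2)
    by (simp add: sum.distrib use_subset_PiE)
  finally show ?thesis .
qed

lemma pure_NE_social_cost_le_smooth:
  assumes NE: "is_pure_NE A Gam use cost per g" and g': "g' \<in> PiE A Gam"
    and degree_le: "\<And>r. r \<in> R \<Longrightarrow> degree (cost r) \<le> d"
    and "0 \<le> a" "smooth_mu d k < 1 + a"
    and per_g: "\<And>i. i \<in> A \<Longrightarrow> a * Jcg A use cost i g \<le> per i (g i)"
    and per_g': "\<And>i. i \<in> A \<Longrightarrow> a * Jcg A use cost i g' \<le> per i (g' i)"
  shows "social_cost A use cost per g
    \<le> (smooth_lambda d k + a) / (1 + a - smooth_mu d k) * social_cost A use cost per g'"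
proof -
  have g: "g \<in> PiE A Gam" using NE unfolding is_pure_NE_def by blast
  have "(\<Sum>r\<in>R. real (load A use g' r) * poly (cost r) (real (load A use g r) + 1))
      \<le> (\<Sum>r\<in>R. smooth_lambda d k * (real (load A use g' r) * poly (cost r) (real (load A use g' r)))
          + smooth_mu d k * (real (load A use g r) * poly (cost r) (real (load A use g r))))"
    using cost_coeff_nonneg degree_le by (intro sum_mono smooth_poly_nat) auto
  also have "\<dots> = smooth_lambda d k * (\<Sum>i\<in>A. Jcg A use cost i g')
      + smooth_mu d k * (\<Sum>i\<in>A. Jcg A use cost i g)"
    by (simp add: sum_Jcg_eq g g' sum.distrib sum_distrib_left)
  finally show ?thesis
    unfolding social_cost_split
    using pure_NE_social_cost_le[OF NE g'] social_cost_split[of g] per_g per_g' assms(4,5)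
      one_le_smooth_lambda smooth_mu_nonneg
    by (intro smoothness_cost_bound) (auto simp: sum_distrib_left intro: sum_mono)
qed

end

theorem theorem1:
  fixes A :: "'a set" and R :: "'r set" and Gam :: "'a \<Rightarrow> 'b set"
    and use :: "'a \<Rightarrow> 'b \<Rightarrow> 'r set" and cost :: "'r \<Rightarrow> real poly"
    and per :: "'a \<Rightarrow> 'b \<Rightarrow> real" and d :: nat and astar psi :: real
  assumes "finite A" and "finite R"
    and "\<And>i. i \<in> A \<Longrightarrow> finite (Gam i)"
    and "\<And>i s. i \<in> A \<Longrightarrow> s \<in> Gam i \<Longrightarrow> use i s \<subseteq> R"
    and "\<And>r n. r \<in> R \<Longrightarrow> coeff (cost r) n \<ge> 0"
    and "\<And>r. r \<in> R \<Longrightarrow> degree (cost r) \<le> d"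
    and "\<And>i s. i \<in> A \<Longrightarrow> s \<in> Gam i \<Longrightarrow> per i s \<ge> 0"
    and "alpha_ok A Gam use cost per astar"
    and "\<And>a. alpha_ok A Gam use cost per a \<Longrightarrow> a \<le> astar"
    and "psi > 0"
    and "psi^(d+1) + astar * psi^(d+1) = (psi + 1)^d + astar"
  shows "\<forall>g g'. is_pure_NE A Gam use cost per g \<and> g' \<in> PiE A Gam \<longrightarrow>
           social_cost A use cost per g
             \<le> poa_bound d astar (nat \<lfloor>psi\<rfloor>) * social_cost A use cost per g'"
proof (intro allI impI, elim conjE)
  fix g g' assume NE: "is_pure_NE A Gam use cost per g" and g': "g' \<in> PiE A Gam"
  interpret congestion_game A Gam R use cost per
    using assms(1,2,4,5) by unfold_locales
  have "finite (PiE A Gam)" using assms(1,3) by (intro finite_PiE) auto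
  then obtain opt where opt: "is_social_opt A Gam use cost per opt"
    using arg_min_if_finite[of "PiE A Gam" "social_cost A use cost per"] g'
    unfolding is_social_opt_def by (metis empty_iff not_less)
  have "0 \<le> astar" using assms(8) by (simp add: alpha_ok_def)
  have mu_less: "smooth_mu d (nat \<lfloor>psi\<rfloor>) < 1 + astar"
    by (rule smooth_mu_floor_root_less[OF \<open>0 \<le> astar\<close> assms(10,11)])
  have "social_cost A use cost per g \<le> poa_bound d astar (nat \<lfloor>psi\<rfloor>) * social_cost A use cost per opt"
    unfolding poa_bound_eq_smooth using assms(6,8) NE opt \<open>0 \<le> astar\<close> mu_less
    by (intro pure_NE_social_cost_le_smooth) (auto simp: alpha_ok_def is_social_opt_def)
  also have "\<dots> \<le> poa_bound d astar (nat \<lfloor>psi\<rfloor>) * social_cost A use cost per g'"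
    using opt g' \<open>0 \<le> astar\<close> mu_less one_le_smooth_lambda[of d "nat \<lfloor>psi\<rfloor>"]
    by (intro mult_left_mono) (auto simp: poa_bound_eq_smooth is_social_opt_def)
  finally show "social_cost A use cost per g
    \<le> poa_bound d astar (nat \<lfloor>psi\<rfloor>) * social_cost A use cost per g'" .
qed

end
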